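(* Let $L$ be a convexity lattice. If $L$ is algebraic, or if $L$ is order-scattered, then $L$ is spatial.
   Context: A convexity lattice is a lattice isomorphic to $Cl(X,\varphi)$, the lattice of closed sets (ordered by inclusion) of a convex geometry $(X,\varphi)$, i.e. a closure operator $\varphi$ on a non-empty set $X$ with $\varphi(\emptyset)=\emptyset$ satisfying: for closed $A$ and $x\neq y$, $x\in\varphi(A\cup\{y\})$ and $x\notin A$ imply $y\notin\varphi(A\cup\{x\})$. A poset is order-scattered if it contains no copy of $\mathbb{Q}$. A complete lattice is spatial if every element is a join of completely join-irreducible elements (elements $y$ with a lower cover $y_*$ such that $z<y$ implies $z\leq y_*$). *)

theory Defs
  imports Complex_Main
begin

definition closure_operator :: "'b set \<Rightarrow> ('b set \<Rightarrow> 'b set) \<Rightarrow> bool" where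
  "closure_operator X \<phi> \<longleftrightarrow>
     (\<forall>A. A \<subseteq> X \<longrightarrow> A \<subseteq> \<phi> A \<and> \<phi> A \<subseteq> X \<and> \<phi> (\<phi> A) = \<phi> A) \<and>
     (\<forall>A B. A \<subseteq> B \<and> B \<subseteq> X \<longrightarrow> \<phi> A \<subseteq> \<phi> B)"

definition closed_sets :: "'b set \<Rightarrow> ('b set \<Rightarrow> 'b set) \<Rightarrow> 'b set set" where
  "closed_sets X \<phi> = {A. A \<subseteq> X \<and> \<phi> A = A}"

definition convex_geometry :: "'b set \<Rightarrow> ('b set \<Rightarrow> 'b set) \<Rightarrow> bool" where
  "convex_geometry X \<phi> \<longleftrightarrow>
     X \<noteq> {} \<and> closure_operator X \<phi> \<and> \<phi> {} = {} \<and>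
     (\<forall>A \<in> closed_sets X \<phi>. \<forall>x\<in>X. \<forall>y\<in>X.
        x \<noteq> y \<and> x \<in> \<phi> (A \<union> {y}) \<and> x \<notin> A \<longrightarrow> y \<notin> \<phi> (A \<union> {x}))"

definition order_iso_to_closed_sets ::
  "('a::order \<Rightarrow> 'b set) \<Rightarrow> 'b set \<Rightarrow> ('b set \<Rightarrow> 'b set) \<Rightarrow> bool" where
  "order_iso_to_closed_sets f X \<phi> \<longleftrightarrow>
     bij_betw f UNIV (closed_sets X \<phi>) \<and> (\<forall>a b. a \<le> b \<longleftrightarrow> f a \<subseteq> f b)"

definition compact_element :: "'a::complete_lattice \<Rightarrow> bool" where
  "compact_element x \<longleftrightarrow>
     (\<forall>S. x \<le> Sup S \<longrightarrow> (\<exists>F. finite F \<and> F \<subseteq> S \<and> x \<le> Sup F))"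

definition algebraic_lattice :: "'a::complete_lattice itself \<Rightarrow> bool" where
  "algebraic_lattice _ \<longleftrightarrow> (\<forall>x::'a. x = Sup {c. compact_element c \<and> c \<le> x})"

definition order_scattered :: "'a::order itself \<Rightarrow> bool" where
  "order_scattered _ \<longleftrightarrow> \<not> (\<exists>f :: rat \<Rightarrow> 'a. \<forall>p q. p < q \<longleftrightarrow> f p < f q)"

definition completely_join_irreducible :: "'a::complete_lattice \<Rightarrow> bool" where
  "completely_join_irreducible y \<longleftrightarrow>
     (\<exists>c. c < y \<and> (\<forall>z. z < y \<longrightarrow> z \<le> c))"

definition spatial :: "'a::complete_lattice itself \<Rightarrow> bool" where
  "spatial _ \<longleftrightarrow> (\<forall>x::'a. x = Sup {y. completely_join_irreducible y \<and> y \<le> x})"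

end

theory Submission
  imports Defs
begin

text \<open>Call \<open>q \<in> X\<close> extreme if \<open>q \<notin> \<phi> (\<phi> {q} - {q})\<close>. Then \<open>\<phi> {q} - {q}\<close> is closed, so \<open>\<phi> {q}\<close> is
  completely join-irreducible in \<open>Cl(X, \<phi>)\<close>, and it suffices to show that every closed set \<open>C\<close>
  is the closure of its extreme points.
  If \<open>L\<close> is order-scattered and \<open>D = \<phi> (extreme points of C) \<subset> C\<close>, anti-exchange makes the
  interval \<open>[D, C]\<close> dense: for closed \<open>D \<subseteq> U \<subset> V \<subseteq> C\<close> and \<open>x \<in> V - U\<close>, either
  \<open>\<phi> (U \<union> {x}) \<subset> V\<close>, or \<open>x\<close> is not extreme and some \<open>y \<in> \<phi> {x} - {x}\<close> outside \<open>U\<close> gives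
  \<open>U \<subset> \<phi> (U \<union> {y}) \<subset> V\<close>. A dense interval of a complete lattice contains a copy of the
  rationals, built along the dyadic rationals and extended by suprema.
  If \<open>L\<close> is algebraic, it suffices to treat compact \<open>C\<close>, which is the closure of a finite set;
  an irredundant such set consists of extreme points, by compactness and a finite form of
  anti-exchange.\<close>

definition squash :: "rat \<Rightarrow> rat" where
  "squash q = (1 + q / (1 + \<bar>q\<bar>)) / 2"

lemma squash_in_unit_interval: "0 \<le> squash q \<and> squash q \<le> 1"
  unfolding squash_def by (auto simp: divide_simps abs_if)

lemma strict_mono_squash: "strict_mono squash"
proof
  fix p q :: rat
  assume "p < q"
  then have "p * (1 + \<bar>q\<bar>) < q * (1 + \<bar>p\<bar>)"
  proof (cases "p < 0 \<and> 0 \<le> q")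
    case True
    then have "p * (1 + \<bar>q\<bar>) < 0" by (simp add: mult_neg_pos add_pos_nonneg)
    also have "0 \<le> q * (1 + \<bar>p\<bar>)" using True by simp
    finally show ?thesis .
  qed (use \<open>p < q\<close> in \<open>auto simp: algebra_simps\<close>)
  then have "p / (1 + \<bar>p\<bar>) < q / (1 + \<bar>q\<bar>)"
    by (simp add: divide_simps add_pos_nonneg mult.commute)
  then show "squash p < squash q"
    unfolding squash_def by (intro divide_strict_right_mono) auto
qed

lemma dyadic_between:
  fixes r s :: rat
  assumes "0 \<le> r" "r < s" "s \<le> 1"
  obtains n k where "Suc k \<le> 2 ^ n" "r < of_nat k / 2 ^ n" "of_nat (Suc k) / 2 ^ n < s"
proof -
  obtain n :: nat where n: "2 / (s - r) < of_nat n" using reals_Archimedean2 by blast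
  have "of_nat n < (2::rat) ^ n" by (rule of_nat_less_two_power)
  with n have "2 / (s - r) < 2 ^ n" by linarith
  with assms have gap: "2 < (s - r) * 2 ^ n" by (simp add: divide_simps mult.commute)
  define k where "k = nat \<lfloor>r * 2 ^ n\<rfloor> + 1"
  have "r * 2 ^ n < of_nat k" "of_nat k \<le> r * 2 ^ n + 1"
    using assms unfolding k_def by (simp_all add: of_nat_nat) linarith
  then have k: "r * 2 ^ n < of_nat k" "of_nat (Suc k) < s * 2 ^ n"
    using gap by (auto simp: algebra_simps)
  have "s * 2 ^ n \<le> (2::rat) ^ n" using assms(3) by (simp add: mult_left_le_one_le)
  then have "of_nat (Suc k) < (2::rat) ^ n" using k by linarith
  then have "Suc k \<le> 2 ^ n"
    by (metis less_imp_le of_nat_le_iff of_nat_numeral of_nat_power)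
  with k show thesis by (intro that) (simp_all add: divide_simps)
qed

locale dense_interval =
  fixes a b :: "'a::complete_lattice"
  assumes nontrivial: "a < b"
    and dense: "\<And>u v. a \<le> u \<Longrightarrow> u < v \<Longrightarrow> v \<le> b \<Longrightarrow> \<exists>w. u < w \<and> w < v"
begin

definition midpoint :: "'a \<Rightarrow> 'a \<Rightarrow> 'a" where
  "midpoint u v = (SOME w. u < w \<and> w < v)"

lemma midpoint_between:
  "a \<le> u \<Longrightarrow> u < v \<Longrightarrow> v \<le> b \<Longrightarrow> u < midpoint u v \<and> midpoint u v < v"
  unfolding midpoint_def using dense by (metis (mono_tags, lifting) someI_ex)

text \<open>\<open>dyadic n k\<close> is the point assigned to the dyadic rational \<open>k / 2^n\<close> of \<open>[0, 1]\<close>.\<close>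

fun dyadic :: "nat \<Rightarrow> nat \<Rightarrow> 'a" where
  "dyadic 0 k = (if k = 0 then a else b)"
| "dyadic (Suc n) k =
     (if even k then dyadic n (k div 2)
      else midpoint (dyadic n (k div 2)) (dyadic n (Suc (k div 2))))"

lemma dyadic_in_interval_and_increasing:
  "(\<forall>k \<le> 2 ^ n. a \<le> dyadic n k \<and> dyadic n k \<le> b) \<and> (\<forall>k < 2 ^ n. dyadic n k < dyadic n (Suc k))"
proof (induction n)
  case 0
  then show ?case using nontrivial by auto
next
  case (Suc n)
  have neighbours: "a \<le> dyadic n (k div 2)" "dyadic n (k div 2) < dyadic n (Suc (k div 2))"
    "dyadic n (Suc (k div 2)) \<le> b" if "k < 2 ^ Suc n" for k
    using Suc that by auto
  note mid = midpoint_between[OF neighbours]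
  have "a \<le> dyadic (Suc n) k \<and> dyadic (Suc n) k \<le> b" if "k \<le> 2 ^ Suc n" for k
  proof (cases "even k")
    case False
    with that have "k < 2 ^ Suc n" by (cases "k = 2 ^ Suc n") auto
    with mid[of k] neighbours[of k] False show ?thesis by (auto intro: order.trans less_imp_le)
  qed (use Suc that in auto)
  moreover have "dyadic (Suc n) k < dyadic (Suc n) (Suc k)" if "k < 2 ^ Suc n" for k
  proof (cases "even k")
    case True
    then have "Suc k div 2 = k div 2" by presburger
    with mid[of k] that show ?thesis by auto
  next
    case False
    then have "Suc k div 2 = Suc (k div 2)" by presburger
    with mid[of k] that False show ?thesis by auto
  qed
  ultimately show ?case by blast
qed

lemma dyadic_strict_mono: "i < j \<Longrightarrow> j \<le> 2 ^ n \<Longrightarrow> dyadic n i < dyadic n j"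
proof (induction j)
  case (Suc j)
  then have "dyadic n j < dyadic n (Suc j)"
    using dyadic_in_interval_and_increasing[of n] by auto
  with Suc show ?case by (cases "i = j") (auto intro: less_trans)
qed simp

lemma dyadic_refine: "dyadic (n + m) (k * 2 ^ m) = dyadic n k"
  by (induction m) (auto simp: mult.commute mult.left_commute)

lemma dyadic_less:
  assumes "k \<le> 2 ^ n" "k' \<le> 2 ^ n'" "(of_nat k / 2 ^ n :: rat) < of_nat k' / 2 ^ n'"
  shows "dyadic n k < dyadic n' k'"
proof -
  have "(of_nat (k * 2 ^ n') :: rat) < of_nat (k' * 2 ^ n)"
    using assms(3) by (simp add: divide_simps)
  then have "k * 2 ^ n' < k' * 2 ^ n" by (rule of_nat_less_imp_less)
  moreover have "k' * 2 ^ n \<le> 2 ^ (n + n')" using assms(2) by (simp add: power_add)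
  ultimately have "dyadic (n + n') (k * 2 ^ n') < dyadic (n' + n) (k' * 2 ^ n)"
    by (simp add: dyadic_strict_mono add.commute)
  then show ?thesis by (simp only: dyadic_refine)
qed

definition on_unit_interval :: "rat \<Rightarrow> 'a" where
  "on_unit_interval r = Sup {dyadic n k | n k. k \<le> 2 ^ n \<and> of_nat k / 2 ^ n < r}"

lemma on_unit_interval_strict_mono:
  assumes "0 \<le> r" "r < s" "s \<le> 1"
  shows "on_unit_interval r < on_unit_interval s"
proof -
  obtain n k where nk: "Suc k \<le> 2 ^ n" "r < of_nat k / 2 ^ n" "of_nat (Suc k) / 2 ^ n < s"
    using dyadic_between[OF assms] .
  have "on_unit_interval r \<le> dyadic n k"
    unfolding on_unit_interval_def
  proof (rule Sup_least, clarify)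
    fix n' k' assume "k' \<le> 2 ^ n'" "of_nat k' / 2 ^ n' < r"
    with nk have "dyadic n' k' < dyadic n k" by (intro dyadic_less) auto
    then show "dyadic n' k' \<le> dyadic n k" by simp
  qed
  also have "\<dots> < dyadic n (Suc k)" using nk by (simp add: dyadic_strict_mono)
  also have "\<dots> \<le> on_unit_interval s"
    unfolding on_unit_interval_def using nk by (intro Sup_upper) blast
  finally show ?thesis .
qed

lemma rat_order_embedding: "\<exists>g :: rat \<Rightarrow> 'a. \<forall>p q. p < q \<longleftrightarrow> g p < g q"
proof -
  have "strict_mono (on_unit_interval \<circ> squash)"
    using on_unit_interval_strict_mono squash_in_unit_interval strict_mono_squash
    by (auto simp: strict_mono_def)
  then show ?thesis using strict_mono_less by (metis comp_apply)
qed

end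

locale convex_geom =
  fixes X :: "'b set" and \<phi> :: "'b set \<Rightarrow> 'b set"
  assumes convex_geometry: "convex_geometry X \<phi>"
begin

abbreviation Cl :: "'b set set" where
  "Cl \<equiv> closed_sets X \<phi>"

lemma closure_operator: "closure_operator X \<phi>"
  using convex_geometry unfolding convex_geometry_def by blast

lemma subset_closure: "A \<subseteq> X \<Longrightarrow> A \<subseteq> \<phi> A"
  using closure_operator unfolding closure_operator_def by simp

lemma closure_in_closed_sets: "A \<subseteq> X \<Longrightarrow> \<phi> A \<in> Cl"
  using closure_operator unfolding closure_operator_def closed_sets_def by simp

lemma closure_mono: "A \<subseteq> B \<Longrightarrow> B \<subseteq> X \<Longrightarrow> \<phi> A \<subseteq> \<phi> B"
  using closure_operator unfolding closure_operator_def by simp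

lemma closed_sets_subset: "C \<in> Cl \<Longrightarrow> C \<subseteq> X"
  and closure_closed: "C \<in> Cl \<Longrightarrow> \<phi> C = C"
  unfolding closed_sets_def by auto

lemma closure_subset: "A \<subseteq> X \<Longrightarrow> \<phi> A \<subseteq> X"
  using closure_in_closed_sets closed_sets_subset by blast

lemma closure_minimal: "A \<subseteq> C \<Longrightarrow> C \<in> Cl \<Longrightarrow> \<phi> A \<subseteq> C"
  using closure_mono closed_sets_subset closure_closed by metis

lemma anti_exchange:
  "\<lbrakk>A \<in> Cl; x \<in> X; y \<in> X; x \<noteq> y; x \<in> \<phi> (A \<union> {y}); x \<notin> A\<rbrakk> \<Longrightarrow> y \<notin> \<phi> (A \<union> {x})"
  using convex_geometry unfolding convex_geometry_def by blast

lemma closure_UN_closure_singletons: "B \<subseteq> X \<Longrightarrow> \<phi> (\<Union>y\<in>B. \<phi> {y}) = \<phi> B"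
proof (rule antisym)
  assume B: "B \<subseteq> X"
  then show "\<phi> (\<Union>y\<in>B. \<phi> {y}) \<subseteq> \<phi> B"
    by (intro closure_minimal closure_in_closed_sets UN_least closure_mono) auto
  have "y \<in> \<phi> {y}" "\<phi> {y} \<subseteq> X" if "y \<in> B" for y
    using that B subset_closure[of "{y}"] closure_subset[of "{y}"] by auto
  then show "\<phi> B \<subseteq> \<phi> (\<Union>y\<in>B. \<phi> {y})"
    by (intro closure_mono) blast+
qed

text \<open>The analogous statement for infinite \<open>F\<close> fails in general; this is where compactness enters.\<close>

lemma anti_exchange_finite:
  assumes "finite F" "A \<in> Cl" "x \<in> X" "x \<notin> A" "F \<subseteq> \<phi> (A \<union> {x}) - {x}"
  shows "x \<notin> \<phi> (A \<union> F)"
  using assms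
proof (induction F arbitrary: A rule: finite_induct)
  case empty
  then show ?case by (simp add: closure_closed)
next
  case (insert y F)
  have AX: "A \<subseteq> X" and AxX: "A \<union> {x} \<subseteq> X"
    using insert.prems closed_sets_subset by auto
  have y: "y \<in> \<phi> (A \<union> {x})" "y \<noteq> x" "y \<in> X"
    using insert.prems closure_subset[OF AxX] by auto
  show ?case
  proof (cases "y \<in> A")
    case True
    then have "A \<union> insert y F = A \<union> F" by blast
    with insert show ?thesis by simp
  next
    case False
    let ?A' = "\<phi> (A \<union> {y})"
    have AyX: "A \<union> {y} \<subseteq> X" using AX y by simp
    have "x \<notin> ?A'" using anti_exchange[OF insert.prems(1) y(3) insert.prems(2)] y False by blast
    moreover have "\<phi> (A \<union> {x}) \<subseteq> \<phi> (?A' \<union> {x})"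
      using subset_closure[OF AyX] closure_subset[OF AyX] insert.prems(2)
      by (intro closure_mono) auto
    ultimately have "x \<notin> \<phi> (?A' \<union> F)"
      using insert closure_in_closed_sets[OF AyX] by blast
    moreover have "\<phi> (A \<union> insert y F) \<subseteq> \<phi> (?A' \<union> F)"
      using subset_closure[OF AyX] closure_subset[OF AyX] insert.prems(4) closure_subset[OF AxX]
      by (intro closure_mono) auto
    ultimately show ?thesis by blast
  qed
qed

definition extreme_points :: "'b set" where
  "extreme_points = {q \<in> X. q \<notin> \<phi> (\<phi> {q} - {q})}"

lemma closure_singleton_minus_closed:
  assumes "q \<in> extreme_points"
  shows "\<phi> {q} - {q} \<in> Cl"
proof -
  have q: "q \<in> X" "q \<notin> \<phi> (\<phi> {q} - {q})" using assms unfolding extreme_points_def by auto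
  then have "\<phi> {q} - {q} \<subseteq> X" using closure_subset by blast
  moreover have "\<phi> (\<phi> {q} - {q}) \<subseteq> \<phi> {q}"
    using q closure_in_closed_sets[of "{q}"] by (intro closure_minimal) auto
  ultimately have "\<phi> (\<phi> {q} - {q}) = \<phi> {q} - {q}" using q subset_closure by blast
  with \<open>\<phi> {q} - {q} \<subseteq> X\<close> show ?thesis unfolding closed_sets_def by blast
qed

lemma closed_set_between:
  assumes "U \<in> Cl" "V \<in> Cl" "U \<subset> V" "(V - U) \<inter> extreme_points = {}"
  shows "\<exists>W\<in>Cl. U \<subset> W \<and> W \<subset> V"
proof -
  obtain x where x: "x \<in> V" "x \<notin> U" using assms(3) by blast
  have xX: "x \<in> X" using assms(2) x closed_sets_subset by blast
  have step: "\<exists>W\<in>Cl. U \<subset> W \<and> W \<subset> V" if "z \<in> V" "z \<notin> U" "\<phi> (U \<union> {z}) \<noteq> V" for z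
  proof -
    have UzX: "U \<union> {z} \<subseteq> X" using that assms closed_sets_subset by blast
    have "\<phi> (U \<union> {z}) \<subseteq> V" using that assms by (intro closure_minimal) auto
    with that subset_closure[OF UzX] closure_in_closed_sets[OF UzX] show ?thesis by blast
  qed
  show ?thesis
  proof (cases "\<phi> (U \<union> {x}) = V")
    case True
    have "x \<in> \<phi> (\<phi> {x} - {x})" using x xX assms(4) unfolding extreme_points_def by blast
    then obtain y where y: "y \<in> \<phi> {x}" "y \<noteq> x" "y \<notin> U"
      using closure_minimal[of "\<phi> {x} - {x}" U] assms(1) x by blast
    have "\<phi> {x} \<subseteq> V" using x assms(2) by (intro closure_minimal) auto
    with y have yV: "y \<in> V" by blast
    have "x \<notin> \<phi> (U \<union> {y})"
      using anti_exchange[OF assms(1) _ xX] y yV True assms(2) closed_sets_subset by blast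
    with x True show ?thesis using step[OF yV y(3)] by blast
  qed (use step x in blast)
qed

end

locale convexity_lattice = convex_geom X \<phi>
  for X :: "'b set" and \<phi> :: "'b set \<Rightarrow> 'b set" +
  fixes f :: "'a::complete_lattice \<Rightarrow> 'b set"
  assumes order_iso: "order_iso_to_closed_sets f X \<phi>"
begin

lemma f_le_iff: "a \<le> b \<longleftrightarrow> f a \<subseteq> f b"
  using order_iso unfolding order_iso_to_closed_sets_def by blast

lemma f_less_iff: "a < b \<longleftrightarrow> f a \<subset> f b"
  by (simp add: less_le_not_le subset_not_subset_eq f_le_iff)

lemma range_f: "range f = Cl"
  using order_iso unfolding order_iso_to_closed_sets_def bij_betw_def by blast

lemma f_in_closed_sets: "f a \<in> Cl"
  using range_f by blast

lemma f_inv: "C \<in> Cl \<Longrightarrow> f (inv f C) = C"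
  by (simp add: f_inv_into_f range_f)

lemma f_Sup: "f (Sup S) = \<phi> (\<Union>(f ` S))"
proof -
  have UX: "\<Union>(f ` S) \<subseteq> X" using f_in_closed_sets closed_sets_subset by blast
  have "Sup S \<le> inv f (\<phi> (\<Union>(f ` S)))"
    using subset_closure[OF UX] f_inv[OF closure_in_closed_sets[OF UX]]
    by (intro Sup_least) (auto simp: f_le_iff)
  moreover have "\<phi> (\<Union>(f ` S)) \<subseteq> f (Sup S)"
    by (intro closure_minimal f_in_closed_sets UN_least) (simp add: Sup_upper flip: f_le_iff)
  ultimately show ?thesis
    using f_inv[OF closure_in_closed_sets[OF UX]] f_le_iff by blast
qed

definition principal :: "'b \<Rightarrow> 'a" where
  "principal y = inv f (\<phi> {y})"

lemma f_principal: "y \<in> X \<Longrightarrow> f (principal y) = \<phi> {y}"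
  unfolding principal_def by (simp add: f_inv closure_in_closed_sets)

lemma f_Sup_principal: "B \<subseteq> X \<Longrightarrow> f (Sup (principal ` B)) = \<phi> B"
proof -
  assume B: "B \<subseteq> X"
  then have "(\<Union>y\<in>B. f (principal y)) = (\<Union>y\<in>B. \<phi> {y})"
    using f_principal by (intro SUP_cong) auto
  with B show ?thesis by (simp add: f_Sup image_image closure_UN_closure_singletons)
qed

lemma principal_le_iff: "y \<in> X \<Longrightarrow> principal y \<le> a \<longleftrightarrow> y \<in> f a"
  using f_principal subset_closure[of "{y}"] closure_minimal[of "{y}" "f a"] f_in_closed_sets
  by (auto simp: f_le_iff)

lemma completely_join_irreducible_principal:
  assumes "q \<in> extreme_points"
  shows "completely_join_irreducible (principal q)"
proof -
  have q: "q \<in> X" using assms unfolding extreme_points_def by blast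
  define c where "c = inv f (\<phi> {q} - {q})"
  have fc: "f c = \<phi> {q} - {q}"
    unfolding c_def using f_inv closure_singleton_minus_closed[OF assms] by blast
  have "c < principal q"
    using fc f_principal[OF q] subset_closure[of "{q}"] q by (auto simp: f_less_iff)
  moreover have "z \<le> c" if "z < principal q" for z
    using that principal_le_iff[OF q, of z] f_principal[OF q] fc by (auto simp: f_less_iff f_le_iff)
  ultimately show ?thesis unfolding completely_join_irreducible_def by blast
qed

lemma spatial_if_generated_by_extreme_points:
  assumes generated: "\<And>C. C \<in> Cl \<Longrightarrow> C \<subseteq> \<phi> (extreme_points \<inter> C)"
  shows "spatial TYPE('a)"
  unfolding spatial_def
proof
  fix x :: 'a
  let ?J = "{y. completely_join_irreducible y \<and> y \<le> x}"
  have EX: "extreme_points \<inter> f x \<subseteq> X" unfolding extreme_points_def by blast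
  have "x \<le> Sup (principal ` (extreme_points \<inter> f x))"
    using generated[OF f_in_closed_sets] f_Sup_principal[OF EX] by (simp add: f_le_iff)
  also have "\<dots> \<le> Sup ?J"
    using EX completely_join_irreducible_principal principal_le_iff by (intro Sup_subset_mono) auto
  finally have "x \<le> Sup ?J" .
  moreover have "Sup ?J \<le> x" by (rule Sup_least) blast
  ultimately show "x = Sup ?J" by simp
qed

lemma generated_by_extreme_points_if_order_scattered:
  assumes scattered: "order_scattered TYPE('a)" and C: "C \<in> Cl"
  shows "C \<subseteq> \<phi> (extreme_points \<inter> C)"
proof (rule ccontr)
  let ?D = "\<phi> (extreme_points \<inter> C)"
  assume "\<not> C \<subseteq> ?D"
  moreover have EC: "extreme_points \<inter> C \<subseteq> X" using C closed_sets_subset by blast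
  moreover have "?D \<subseteq> C" using C by (intro closure_minimal) auto
  ultimately have D: "?D \<in> Cl" "?D \<subset> C" using closure_in_closed_sets by auto
  interpret dense_interval "inv f ?D" "inv f C"
  proof
    show "inv f ?D < inv f C" using D C by (simp add: f_less_iff f_inv)
    fix u v assume "inv f ?D \<le> u" "u < v" "v \<le> inv f C"
    then have "f u \<subset> f v" "?D \<subseteq> f u" "f v \<subseteq> C"
      using D C by (simp_all add: f_less_iff f_le_iff f_inv)
    moreover have "extreme_points \<inter> C \<subseteq> ?D" using subset_closure[OF EC] .
    ultimately have "(f v - f u) \<inter> extreme_points = {}" by blast
    then obtain W where "W \<in> Cl" "f u \<subset> W" "W \<subset> f v"
      using closed_set_between[OF f_in_closed_sets f_in_closed_sets \<open>f u \<subset> f v\<close>] by blast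
    then have "u < inv f W \<and> inv f W < v" by (simp add: f_less_iff f_inv)
    then show "\<exists>w. u < w \<and> w < v" ..
  qed
  from rat_order_embedding scattered show False unfolding order_scattered_def by blast
qed

lemma compact_element_finite_cover:
  assumes "compact_element c" "B \<subseteq> X" "f c \<subseteq> \<phi> B"
  obtains F where "finite F" "F \<subseteq> B" "f c \<subseteq> \<phi> F"
proof -
  have "c \<le> Sup (principal ` B)" using assms(2,3) by (simp add: f_le_iff f_Sup_principal)
  then obtain P where "finite P" "P \<subseteq> principal ` B" "c \<le> Sup P"
    using assms(1) unfolding compact_element_def by blast
  then obtain F where F: "finite F" "F \<subseteq> B" "c \<le> Sup (principal ` F)"
    by (metis finite_subset_image)
  then have "f c \<subseteq> \<phi> F" using assms(2) by (simp add: f_le_iff f_Sup_principal)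
  with F show thesis by (intro that) auto
qed

lemma extreme_point_if_irredundant:
  assumes c: "compact_element c" and F: "finite F" "F \<subseteq> f c" "\<phi> F = f c"
    and x: "x \<in> F" "x \<notin> \<phi> (F - {x})"
  shows "x \<in> extreme_points"
proof (unfold extreme_points_def, intro CollectI conjI notI)
  let ?K = "f c" and ?A = "\<phi> (F - {x})"
  have KX: "?K \<subseteq> X" using closed_sets_subset[OF f_in_closed_sets] .
  have FX: "F \<subseteq> X" using F(2) KX by (rule order_trans)
  have xK: "x \<in> ?K" using x(1) F(2) by blast
  show xX: "x \<in> X" using xK KX by blast
  have KxX: "?K - {x} \<subseteq> X" using KX by blast
  have A: "?A \<in> Cl" using FX by (intro closure_in_closed_sets) blast
  assume "x \<in> \<phi> (\<phi> {x} - {x})"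
  moreover have "\<phi> {x} \<subseteq> ?K" using xK by (intro closure_minimal f_in_closed_sets) auto
  ultimately have "x \<in> \<phi> (?K - {x})" using closure_mono[OF _ KxX, of "\<phi> {x} - {x}"] by blast
  then have "F \<subseteq> \<phi> (?K - {x})" using F(2) subset_closure[OF KxX] by blast
  then have "\<phi> F \<subseteq> \<phi> (?K - {x})" by (rule closure_minimal[OF _ closure_in_closed_sets[OF KxX]])
  with F(3) have "?K \<subseteq> \<phi> (?K - {x})" by simp
  then obtain F' where F': "finite F'" "F' \<subseteq> ?K - {x}" "?K \<subseteq> \<phi> F'"
    using compact_element_finite_cover[OF c KxX] by blast
  have AxX: "?A \<union> {x} \<subseteq> X" using closed_sets_subset[OF A] xX by blast
  have "F \<subseteq> ?A \<union> {x}" using subset_closure[of "F - {x}"] FX by blast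
  then have "?K \<subseteq> \<phi> (?A \<union> {x})" using closure_mono[OF _ AxX] F(3) by blast
  with F'(2) have "F' \<subseteq> \<phi> (?A \<union> {x}) - {x}" by blast
  then have "x \<notin> \<phi> (?A \<union> F')" by (rule anti_exchange_finite[OF F'(1) A xX x(2)])
  moreover have "\<phi> F' \<subseteq> \<phi> (?A \<union> F')"
    using F'(2) KX closed_sets_subset[OF A] by (intro closure_mono) auto
  ultimately show False using F'(3) xK by blast
qed

lemma compact_generated_by_extreme_points:
  assumes c: "compact_element c"
  shows "f c \<subseteq> \<phi> (extreme_points \<inter> f c)"
proof -
  have KX: "f c \<subseteq> X" using closed_sets_subset[OF f_in_closed_sets] .
  have EKX: "extreme_points \<inter> f c \<subseteq> X" using KX by blast
  have "f c \<subseteq> \<phi> (extreme_points \<inter> f c)" if "finite F" "F \<subseteq> f c" "\<phi> F = f c" for F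
    using that
  proof (induction F rule: finite_psubset_induct)
    case (psubset F)
    have FX: "F \<subseteq> X" using psubset.prems(1) KX by (rule order_trans)
    show ?case
    proof (cases "\<exists>x\<in>F. x \<in> \<phi> (F - {x})")
      case True
      then obtain x where x: "x \<in> F" "x \<in> \<phi> (F - {x})" by blast
      have FxX: "F - {x} \<subseteq> X" using FX by blast
      have "F \<subseteq> \<phi> (F - {x})" using x subset_closure[OF FxX] by blast
      then have "\<phi> F \<subseteq> \<phi> (F - {x})" by (rule closure_minimal[OF _ closure_in_closed_sets[OF FxX]])
      moreover have "\<phi> (F - {x}) \<subseteq> \<phi> F" using FX by (intro closure_mono) auto
      ultimately have "\<phi> (F - {x}) = f c" using psubset.prems(2) by simp
      then show ?thesis by (rule psubset.IH[rotated 2]) (use x psubset.prems(1) in auto)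
    next
      case False
      then have "F \<subseteq> extreme_points \<inter> f c"
        using extreme_point_if_irredundant[OF c psubset.hyps(1) psubset.prems] psubset.prems(1) by blast
      then show ?thesis using closure_mono[OF _ EKX] psubset.prems(2) by blast
    qed
  qed
  moreover obtain F where F: "finite F" "F \<subseteq> f c" "f c \<subseteq> \<phi> F"
    using compact_element_finite_cover[OF c KX subset_closure[OF KX]] by blast
  moreover have "\<phi> F \<subseteq> f c" using F(2) by (rule closure_minimal[OF _ f_in_closed_sets])
  ultimately show ?thesis by blast
qed

lemma generated_by_extreme_points_if_algebraic:
  assumes algebraic: "algebraic_lattice TYPE('a)" and C: "C \<in> Cl"
  shows "C \<subseteq> \<phi> (extreme_points \<inter> C)"
proof -
  let ?E = "\<phi> (extreme_points \<inter> C)"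
  define compacts where "compacts = {c. compact_element c \<and> c \<le> inv f C}"
  have ECX: "extreme_points \<inter> C \<subseteq> X" using closed_sets_subset[OF C] by blast
  have "C = f (Sup compacts)"
    using algebraic f_inv[OF C] unfolding algebraic_lattice_def compacts_def by simp
  also have "\<dots> = \<phi> (\<Union>(f ` compacts))" by (rule f_Sup)
  also have "\<dots> \<subseteq> ?E"
  proof (intro closure_minimal closure_in_closed_sets ECX UN_least)
    fix c assume "c \<in> compacts"
    then have c: "compact_element c" "f c \<subseteq> C"
      using f_inv[OF C] by (auto simp: compacts_def f_le_iff)
    have "f c \<subseteq> \<phi> (extreme_points \<inter> f c)" by (rule compact_generated_by_extreme_points[OF c(1)])
    also have "\<dots> \<subseteq> ?E" using c(2) by (intro closure_mono ECX) blast
    finally show "f c \<subseteq> ?E" .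
  qed
  finally show ?thesis .
qed

end

theorem corollary3p2:
  fixes f :: "'a::complete_lattice \<Rightarrow> 'b set"
    and X :: "'b set" and \<phi> :: "'b set \<Rightarrow> 'b set"
  assumes "convex_geometry X \<phi>"
    and "order_iso_to_closed_sets f X \<phi>"
    and "algebraic_lattice TYPE('a) \<or> order_scattered TYPE('a)"
  shows "spatial TYPE('a)"
proof -
  interpret convexity_lattice X \<phi> f
    using assms(1,2) by unfold_locales
  show ?thesis
    using assms(3) generated_by_extreme_points_if_algebraic generated_by_extreme_points_if_order_scattered
    by (auto intro: spatial_if_generated_by_extreme_points)
qed

end
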